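(* Let $G=(V,E)$ be a finite simple graph with at least one edge and no isolated vertices. Then $\lambda_{\max}(G)\ge 2\rho(G)^{-1}$, and $\lambda_{\max}(G)\ge 2\rho(A)^{-1}\frac{|A|}{|A|+|\delta(A)|}$ for all nonempty $A\subseteq E$. Moreover, if $G$ is uniformly dense, then $\lambda_{\max}(G|A)\ge 2\rho(G)^{-1}$ for all nonempty $A\subseteq E$.
   Context: $c(A)$ is the number of components of $(V,A)$, $\operatorname{rank}(A)=|V|-c(A)$, $\rho(A)=|A|/\operatorname{rank}(A)$, $\rho(G)=\rho(E)$; $G$ is uniformly dense if $\rho(A)\le\rho(G)$ for all nonempty $A\subseteq E$. $G|A$ is the graph obtained from $(V,A)$ by deleting isolated vertices, with vertex set $V|_A$. The normalized Laplacian $L(G)$ acts on $f:V\to\mathbb{R}$ by $Lf(v)=f(v)-\frac{1}{\deg v}\sum_{u:\{u,v\}\in E}f(u)$; its eigenvalues are real and nonnegative, and $\lambda_{\max}(G)$ (resp. $\lambda_{\max}(G|A)$) denotes the largest eigenvalue of $L(G)$ (resp. $L(G|A)$). The boundary of $A$ is $\delta(A)=\{e\in E\setminus A: \text{at least one endpoint of } e \text{ lies in } V|_A\}$. *)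

theory Defs
  imports Complex_Main
begin

definition simple_graph :: "'a set \<Rightarrow> 'a set set \<Rightarrow> bool" where
  "simple_graph V E \<longleftrightarrow> finite V \<and>
     (\<forall>e\<in>E. \<exists>u v. u \<noteq> v \<and> u \<in> V \<and> v \<in> V \<and> e = {u, v})"

definition no_isolated :: "'a set \<Rightarrow> 'a set set \<Rightarrow> bool" where
  "no_isolated V E \<longleftrightarrow> (\<forall>v\<in>V. \<exists>e\<in>E. v \<in> e)"

definition conn_rel :: "'a set \<Rightarrow> 'a set set \<Rightarrow> ('a \<times> 'a) set" where
  "conn_rel V A = ({(u, v). {u, v} \<in> A})\<^sup>* \<inter> (V \<times> V)"

definition num_components :: "'a set \<Rightarrow> 'a set set \<Rightarrow> nat" where
  "num_components V A = card (V // conn_rel V A)"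

definition graph_rank :: "'a set \<Rightarrow> 'a set set \<Rightarrow> nat" where
  "graph_rank V A = card V - num_components V A"

definition density :: "'a set \<Rightarrow> 'a set set \<Rightarrow> real" where
  "density V A = real (card A) / real (graph_rank V A)"

definition uniformly_dense :: "'a set \<Rightarrow> 'a set set \<Rightarrow> bool" where
  "uniformly_dense V E \<longleftrightarrow> (\<forall>A. A \<subseteq> E \<and> A \<noteq> {} \<longrightarrow> density V A \<le> density V E)"

text \<open>Vertex set V|_A of the graph G|A.\<close>
definition restr_vertices :: "'a set set \<Rightarrow> 'a set" where
  "restr_vertices A = \<Union>A"

definition boundary :: "'a set set \<Rightarrow> 'a set set \<Rightarrow> 'a set set" where
  "boundary E A = {e \<in> E - A. e \<inter> restr_vertices A \<noteq> {}}"

definition degree :: "'a set set \<Rightarrow> 'a \<Rightarrow> nat" where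
  "degree E v = card {e \<in> E. v \<in> e}"

definition norm_laplacian :: "'a set \<Rightarrow> 'a set set \<Rightarrow> ('a \<Rightarrow> real) \<Rightarrow> 'a \<Rightarrow> real" where
  "norm_laplacian V E f v =
     f v - (1 / real (degree E v)) * (\<Sum>u\<in>{u \<in> V. {u, v} \<in> E}. f u)"

definition laplacian_eigenvalue :: "'a set \<Rightarrow> 'a set set \<Rightarrow> real \<Rightarrow> bool" where
  "laplacian_eigenvalue V E mu \<longleftrightarrow>
     (\<exists>f. (\<exists>v\<in>V. f v \<noteq> 0) \<and> (\<forall>v\<in>V. norm_laplacian V E f v = mu * f v))"

definition lambda_max :: "'a set \<Rightarrow> 'a set set \<Rightarrow> real" where
  "lambda_max V E = Max {mu. laplacian_eigenvalue V E mu}"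

end

theory Submission
  imports Defs "HOL-Analysis.Function_Topology" "HOL-Library.Function_Algebras"
begin

text \<open>
  The largest eigenvalue of the normalized Laplacian is the maximum of the Rayleigh quotient
  \<open>\<Sum>\<^bsub>uv \<in> E\<^esub> (f u - f v)\<^sup>2 / \<Sum>\<^bsub>v\<^esub> deg v \<cdot> (f v)\<^sup>2\<close>; the maximum exists by compactness of the unit
  sphere, and a maximizer is an eigenfunction. For \<open>A \<subseteq> E\<close> some 2-colouring \<open>\<sigma>\<close> of the vertices
  separates the endpoints of at least \<open>rank(A)\<close> edges of \<open>A\<close> (add the edges one by one; when an
  edge joins two components, swap the colours on one of them). The test function that is \<open>\<pm>1\<close>
  according to \<open>\<sigma>\<close> on \<open>V|\<^sub>A\<close> and \<open>0\<close> elsewhere has numerator at least \<open>4 rank(A)\<close> and denominator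
  \<open>\<Sum>\<^bsub>v \<in> V|\<^sub>A\<^esub> deg v \<le> 2(|A| + |\<delta>(A)|)\<close>, which is the second bound; \<open>A = E\<close> gives the first.
  If \<open>G\<close> is uniformly dense, \<open>\<rho>(A) \<le> \<rho>(G)\<close>, and the bound for the graph \<open>G|A\<close> itself, in which
  \<open>A\<close> has empty boundary, gives the third.
\<close>

lemma simple_graph_Union_subset: "simple_graph V A \<Longrightarrow> \<Union>A \<subseteq> V"
  unfolding simple_graph_def by fastforce

lemma simple_graph_finite_edges:
  assumes "simple_graph V A"
  shows "finite A"
  using finite_subset[OF simple_graph_Union_subset[OF assms]] assms
  by (auto simp: simple_graph_def dest: finite_UnionD)

lemma simple_graph_edgeE:
  assumes "simple_graph V A" and "e \<in> A"
  obtains u v where "u \<noteq> v" "u \<in> V" "v \<in> V" "e = {u, v}"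
  using assms unfolding simple_graph_def by blast

lemma simple_graph_mono: "simple_graph V E \<Longrightarrow> A \<subseteq> E \<Longrightarrow> simple_graph V A"
  unfolding simple_graph_def by blast

lemma simple_graph_restr_vertices:
  assumes "simple_graph V A"
  shows "simple_graph (restr_vertices A) A"
  unfolding simple_graph_def restr_vertices_def
proof
  show "finite (\<Union>A)"
    using finite_subset[OF simple_graph_Union_subset[OF assms]] assms by (simp add: simple_graph_def)
  show "\<forall>e\<in>A. \<exists>u v. u \<noteq> v \<and> u \<in> \<Union>A \<and> v \<in> \<Union>A \<and> e = {u, v}"
  proof
    fix e assume "e \<in> A"
    then obtain u v where "u \<noteq> v" "e = {u, v}"
      using assms by (blast elim: simple_graph_edgeE)
    with \<open>e \<in> A\<close> show "\<exists>u v. u \<noteq> v \<and> u \<in> \<Union>A \<and> v \<in> \<Union>A \<and> e = {u, v}"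
      by (intro exI[of _ u] exI[of _ v]) auto
  qed
qed

lemma no_isolated_restr_vertices: "no_isolated (restr_vertices A) A"
  unfolding no_isolated_def restr_vertices_def by blast

section \<open>Components and rank\<close>

definition adj_rel :: "'a set set \<Rightarrow> ('a \<times> 'a) set" where
  "adj_rel A = {(u, v). {u, v} \<in> A}"

lemma conn_rel_adj_rel: "conn_rel V A = (adj_rel A)\<^sup>* \<inter> V \<times> V"
  unfolding conn_rel_def adj_rel_def ..

lemma sym_adj_rel: "sym (adj_rel A)"
  unfolding adj_rel_def sym_def by (auto simp: insert_commute)

lemma adj_rel_insert: "adj_rel (insert {a, b} A) = insert (a, b) (insert (b, a) (adj_rel A))"
  unfolding adj_rel_def by (auto simp: doubleton_eq_iff)

lemma equiv_conn_rel: "equiv V (conn_rel V A)"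
  using sym_rtrancl[OF sym_adj_rel, of A]
  unfolding conn_rel_adj_rel equiv_def refl_on_def sym_def trans_def
  by (blast intro: rtrancl_trans)

lemma rtrancl_insert_pair_cases:
  assumes "(x, y) \<in> (insert (a, b) (insert (b, a) R))\<^sup>*"
  obtains "(x, y) \<in> R\<^sup>*" | "(x, a) \<in> R\<^sup>*" "(b, y) \<in> R\<^sup>*" | "(x, b) \<in> R\<^sup>*" "(a, y) \<in> R\<^sup>*"
  using assms by (induction rule: rtrancl_induct) (auto intro: rtrancl_into_rtrancl)

lemma num_components_empty: "num_components V {} = card V"
proof -
  have "V // conn_rel V {} = (\<lambda>x. {x}) ` V"
    unfolding conn_rel_def quotient_def by auto
  then show ?thesis
    unfolding num_components_def by (simp add: card_image)
qed

lemma num_components_insert_connected: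
  assumes "(a, b) \<in> (adj_rel A)\<^sup>*"
  shows "num_components V (insert {a, b} A) = num_components V A"
proof -
  have "(adj_rel (insert {a, b} A))\<^sup>* = (adj_rel A)\<^sup>*"
    unfolding adj_rel_insert
  proof (rule rtrancl_subset)
    show "insert (a, b) (insert (b, a) (adj_rel A)) \<subseteq> (adj_rel A)\<^sup>*"
      using assms sym_rtrancl[OF sym_adj_rel, of A] by (auto dest: symD)
  qed auto
  then show ?thesis
    unfolding num_components_def conn_rel_adj_rel by simp
qed

lemma Image_Image_equiv_class:
  assumes "equiv V R" and "equiv V R'" and "R \<subseteq> R'" and "x \<in> V"
  shows "R' `` (R `` {x}) = R' `` {x}"
proof (intro equalityI subsetI)
  fix z assume "z \<in> R' `` (R `` {x})"
  then obtain y where "(x, y) \<in> R'" "(y, z) \<in> R'"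
    using \<open>R \<subseteq> R'\<close> by blast
  then show "z \<in> R' `` {x}"
    using \<open>equiv V R'\<close> by (auto elim: equivE dest: transD)
next
  fix z assume "z \<in> R' `` {x}"
  moreover have "(x, x) \<in> R"
    using assms(1,4) by (auto elim: equivE dest: refl_onD)
  ultimately show "z \<in> R' `` (R `` {x})" by blast
qed

lemma conn_rel_mono_insert: "conn_rel V A \<subseteq> conn_rel V (insert {a, b} A)"
  unfolding conn_rel_adj_rel adj_rel_insert
  using rtrancl_mono[of "adj_rel A" "insert (a, b) (insert (b, a) (adj_rel A))"] by blast

lemma inj_on_Image_conn_rel_insert:
  assumes "b \<in> V"
  shows "inj_on ((``) (conn_rel V (insert {a, b} A))) (V // conn_rel V A - {conn_rel V A `` {b}})"
proof (rule inj_onI)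
  let ?R = "conn_rel V A" and ?R' = "conn_rel V (insert {a, b} A)"
  have R: "equiv V ?R" and R': "equiv V ?R'"
    by (rule equiv_conn_rel)+
  fix X Y
  assume "X \<in> V // ?R - {?R `` {b}}" "Y \<in> V // ?R - {?R `` {b}}" and eq: "?R' `` X = ?R' `` Y"
  then obtain x y where x: "x \<in> V" "X = ?R `` {x}" "X \<noteq> ?R `` {b}"
    and y: "y \<in> V" "Y = ?R `` {y}" "Y \<noteq> ?R `` {b}"
    by (auto elim!: quotientE)
  from eq have "(x, y) \<in> (insert (a, b) (insert (b, a) (adj_rel A)))\<^sup>*"
    using x y R R' Image_Image_equiv_class[OF R R' conn_rel_mono_insert]
    by (simp add: eq_equiv_class_iff conn_rel_adj_rel adj_rel_insert)
  then show "X = Y"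
  proof (cases rule: rtrancl_insert_pair_cases)
    case 1
    then show ?thesis using x y R by (simp add: equiv_class_eq conn_rel_adj_rel)
  next
    case 2
    then have "(b, y) \<in> ?R" using y \<open>b \<in> V\<close> by (simp add: conn_rel_adj_rel)
    then show ?thesis using y R by (simp add: equiv_class_eq)
  next
    case 3
    then have "(x, b) \<in> ?R" using x \<open>b \<in> V\<close> by (simp add: conn_rel_adj_rel)
    then show ?thesis using x R by (simp add: equiv_class_eq)
  qed
qed

lemma num_components_le_insert:
  assumes "finite V" and "b \<in> V"
  shows "num_components V A \<le> num_components V (insert {a, b} A) + 1"
proof -
  let ?R = "conn_rel V A" and ?R' = "conn_rel V (insert {a, b} A)"
  let ?Q = "V // ?R - {?R `` {b}}"
  have "?R' `` (?R `` {x}) = ?R' `` {x}" if "x \<in> V" for x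
    using equiv_conn_rel equiv_conn_rel conn_rel_mono_insert that by (rule Image_Image_equiv_class)
  then have "(``) ?R' ` ?Q \<subseteq> V // ?R'"
    by (auto elim!: quotientE intro: quotientI)
  moreover have "finite (V // ?R')"
    using \<open>finite V\<close> equiv_conn_rel[of V "insert {a, b} A"] by (simp add: finite_quotient equiv_type)
  ultimately have "card ?Q \<le> card (V // ?R')"
    using inj_on_Image_conn_rel_insert[OF \<open>b \<in> V\<close>] by (intro card_inj_on_le)
  moreover have "card (V // ?R) \<le> card ?Q + 1"
    by (simp add: card_Diff_singleton_if) linarith
  ultimately show ?thesis
    unfolding num_components_def by linarith
qed

lemma graph_rank_pos:
  assumes "simple_graph V A" and "A \<noteq> {}"
  shows "0 < graph_rank V A"
proof -
  obtain e where "e \<in> A"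
    using assms(2) by blast
  then obtain a b where ab: "a \<noteq> b" "a \<in> V" "b \<in> V" "{a, b} \<in> A"
    using assms(1) by (metis simple_graph_edgeE)
  let ?R = "conn_rel V A"
  have "(a, b) \<in> ?R"
    using ab unfolding conn_rel_def by auto
  then have "?R `` {b} = ?R `` {a}"
    using equiv_conn_rel by (metis equiv_class_eq)
  then have "V // ?R = (\<lambda>x. ?R `` {x}) ` (V - {b})"
    unfolding quotient_def using ab by auto
  then have "num_components V A \<le> card (V - {b})"
    unfolding num_components_def using assms(1) by (simp add: simple_graph_def card_image_le)
  also have "\<dots> < card V"
    using assms(1) \<open>b \<in> V\<close> unfolding simple_graph_def by (meson card_Diff1_less)
  finally show ?thesis
    unfolding graph_rank_def by simp
qed

lemma divide_density: "c / density V A = c * real (graph_rank V A) / real (card A)"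
  unfolding density_def by simp

section \<open>Cuts of at least rank size\<close>

text \<open>Ordered pairs, so that every edge of \<open>A\<close> separated by \<open>\<sigma>\<close> contributes exactly one arc.\<close>
definition cut_arcs :: "'a set set \<Rightarrow> ('a \<Rightarrow> bool) \<Rightarrow> ('a \<times> 'a) set" where
  "cut_arcs A \<sigma> = {(u, v). {u, v} \<in> A \<and> \<sigma> u \<and> \<not> \<sigma> v}"

lemma finite_cut_arcs: "finite (\<Union>A) \<Longrightarrow> finite (cut_arcs A \<sigma>)"
  by (rule finite_subset[of _ "\<Union>A \<times> \<Union>A"]) (auto simp: cut_arcs_def)

lemma card_cut_arcs_mono:
  "A \<subseteq> B \<Longrightarrow> finite (\<Union>B) \<Longrightarrow> card (cut_arcs A \<sigma>) \<le> card (cut_arcs B \<sigma>)"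
  by (intro card_mono finite_cut_arcs) (auto simp: cut_arcs_def)

lemma card_cut_arcs_insert:
  assumes "finite (\<Union>A)" and "{a, b} \<notin> A" and "\<sigma> a \<noteq> \<sigma> b"
  shows "card (cut_arcs (insert {a, b} A) \<sigma>) = Suc (card (cut_arcs A \<sigma>))"
proof -
  obtain x y where "{x, y} = {a, b}" "\<sigma> x" "\<not> \<sigma> y"
    using \<open>\<sigma> a \<noteq> \<sigma> b\<close> by (metis insert_commute)
  then have "cut_arcs (insert {a, b} A) \<sigma> = insert (x, y) (cut_arcs A \<sigma>)"
    and "(x, y) \<notin> cut_arcs A \<sigma>"
    using \<open>{a, b} \<notin> A\<close> by (auto simp: cut_arcs_def doubleton_eq_iff insert_commute)
  then show ?thesis
    using finite_cut_arcs[OF \<open>finite (\<Union>A)\<close>] by simp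
qed

lemma card_cut_arcs_flip:
  assumes "finite (\<Union>A)" and closed: "\<And>u v. {u, v} \<in> A \<Longrightarrow> u \<in> C \<longleftrightarrow> v \<in> C"
  shows "card (cut_arcs A \<sigma>) \<le> card (cut_arcs A (\<lambda>x. \<sigma> x \<noteq> (x \<in> C)))"
proof (rule card_inj_on_le)
  let ?\<phi> = "\<lambda>p. if fst p \<in> C then prod.swap p else p"
  have same_side: "fst p \<in> C \<longleftrightarrow> snd p \<in> C" if "p \<in> cut_arcs A \<sigma>" for p
    using that closed by (auto simp: cut_arcs_def)
  show "inj_on ?\<phi> (cut_arcs A \<sigma>)"
    by (rule inj_onI) (auto simp: prod_eq_iff dest!: same_side split: if_splits)
  show "?\<phi> ` cut_arcs A \<sigma> \<subseteq> cut_arcs A (\<lambda>x. \<sigma> x \<noteq> (x \<in> C))"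
  proof (rule image_subsetI)
    fix p assume "p \<in> cut_arcs A \<sigma>"
    moreover obtain u v where "p = (u, v)" by fastforce
    ultimately have "{u, v} \<in> A" "{v, u} \<in> A" "\<sigma> u" "\<not> \<sigma> v" "u \<in> C \<longleftrightarrow> v \<in> C"
      using closed by (auto simp: cut_arcs_def insert_commute)
    then show "?\<phi> p \<in> cut_arcs A (\<lambda>x. \<sigma> x \<noteq> (x \<in> C))"
      using \<open>p = (u, v)\<close> by (auto simp: cut_arcs_def)
  qed
  show "finite (cut_arcs A (\<lambda>x. \<sigma> x \<noteq> (x \<in> C)))"
    using \<open>finite (\<Union>A)\<close> by (rule finite_cut_arcs)
qed

lemma ex_cut_arcs_insert_bridge:
  assumes fin: "finite (\<Union>(insert {a, b} A))" and bridge: "(a, b) \<notin> (adj_rel A)\<^sup>*"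
  shows "\<exists>\<tau>. Suc (card (cut_arcs A \<sigma>)) \<le> card (cut_arcs (insert {a, b} A) \<tau>)"
proof -
  define C where "C = {x. (a, x) \<in> (adj_rel A)\<^sup>*}"
  have closed: "u \<in> C \<longleftrightarrow> v \<in> C" if "{u, v} \<in> A" for u v
    using that rtrancl_into_rtrancl[of a _ "adj_rel A"] sym_adj_rel[of A]
    unfolding C_def adj_rel_def by (auto simp: insert_commute)
  define \<tau> where "\<tau> = (if \<sigma> a = \<sigma> b then (\<lambda>x. \<sigma> x \<noteq> (x \<in> C)) else \<sigma>)"
  have "a \<in> C" "b \<notin> C"
    using bridge unfolding C_def by auto
  then have "\<tau> a \<noteq> \<tau> b"
    unfolding \<tau>_def by auto
  have "card (cut_arcs A \<sigma>) \<le> card (cut_arcs A \<tau>)"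
    using card_cut_arcs_flip[OF _ closed] fin unfolding \<tau>_def by auto
  moreover have "{a, b} \<notin> A"
    using bridge unfolding adj_rel_def by auto
  then have "card (cut_arcs (insert {a, b} A) \<tau>) = Suc (card (cut_arcs A \<tau>))"
    using card_cut_arcs_insert \<open>\<tau> a \<noteq> \<tau> b\<close> fin by simp
  ultimately have "Suc (card (cut_arcs A \<sigma>)) \<le> card (cut_arcs (insert {a, b} A) \<tau>)"
    by simp
  then show ?thesis by blast
qed

lemma ex_cut_arcs_num_components:
  assumes "simple_graph V A"
  shows "\<exists>\<sigma>. card V \<le> card (cut_arcs A \<sigma>) + num_components V A"
  using simple_graph_finite_edges[OF assms] assms
proof (induction A rule: finite_induct)
  case empty
  then show ?case
    by (simp add: num_components_empty)
next
  case (insert e A)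
  then obtain \<sigma> where \<sigma>: "card V \<le> card (cut_arcs A \<sigma>) + num_components V A"
    using simple_graph_mono[of V "insert e A" A] by auto
  obtain a b where e: "e = {a, b}" "b \<in> V"
    using insert.prems by (blast elim: simple_graph_edgeE)
  have "finite V"
    using insert.prems by (simp add: simple_graph_def)
  with simple_graph_Union_subset[OF insert.prems] have fin: "finite (\<Union>(insert e A))"
    by (rule finite_subset)
  show ?case
  proof (cases "(a, b) \<in> (adj_rel A)\<^sup>*")
    case True
    then have "num_components V (insert e A) = num_components V A"
      using num_components_insert_connected e by simp
    moreover have "card (cut_arcs A \<sigma>) \<le> card (cut_arcs (insert e A) \<sigma>)"
      using card_cut_arcs_mono[OF subset_insertI fin] .
    ultimately have "card V \<le> card (cut_arcs (insert e A) \<sigma>) + num_components V (insert e A)"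
      using \<sigma> by linarith
    then show ?thesis by blast
  next
    case False
    then obtain \<tau> where "Suc (card (cut_arcs A \<sigma>)) \<le> card (cut_arcs (insert e A) \<tau>)"
      using ex_cut_arcs_insert_bridge[of a b A \<sigma>] fin unfolding e(1) by blast
    moreover have "num_components V A \<le> num_components V (insert e A) + 1"
      using num_components_le_insert[OF \<open>finite V\<close> \<open>b \<in> V\<close>] e by simp
    ultimately have "card V \<le> card (cut_arcs (insert e A) \<tau>) + num_components V (insert e A)"
      using \<sigma> by linarith
    then show ?thesis by blast
  qed
qed

lemma ex_cut_arcs_ge_graph_rank:
  assumes "simple_graph V A"
  shows "\<exists>\<sigma>. graph_rank V A \<le> card (cut_arcs A \<sigma>)"
proof -
  obtain \<sigma> where "card V \<le> card (cut_arcs A \<sigma>) + num_components V A"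
    using ex_cut_arcs_num_components[OF assms] by blast
  then have "graph_rank V A \<le> card (cut_arcs A \<sigma>)"
    unfolding graph_rank_def by linarith
  then show ?thesis by blast
qed

section \<open>The Rayleigh quotient of the normalized Laplacian\<close>

lemma linear_coeff_eq_0_if_quadratic_nonpos:
  fixes a b :: real
  assumes "\<And>t. 2 * t * b + t\<^sup>2 * a \<le> 0"
  shows "b = 0"
proof -
  define k where "k = \<bar>a\<bar> + 1"
  have "k > 0" and "2 * k + a > 0"
    unfolding k_def by auto
  have "(2 * (b / k) * b + (b / k)\<^sup>2 * a) * k\<^sup>2 \<le> 0"
    using assms[of "b / k"] by (simp add: mult_nonpos_nonneg)
  also have "(2 * (b / k) * b + (b / k)\<^sup>2 * a) * k\<^sup>2 = b\<^sup>2 * (2 * k + a)"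
    using \<open>k > 0\<close> by (simp add: field_simps power2_eq_square)
  finally show "b = 0"
    using \<open>2 * k + a > 0\<close> by (simp add: mult_le_0_iff)
qed

interpretation real_fun: vector_space "\<lambda>c (f :: 'a \<Rightarrow> real) x. c * f x"
  by unfold_locales (auto simp: fun_eq_iff algebra_simps)

lemma sum_fun_apply: "sum F S x = (\<Sum>w\<in>S. F w x)"
  by (induction S rule: infinite_finite_induct) auto

locale graph_without_isolated =
  fixes V :: "'a set" and E :: "'a set set"
  assumes simple_graph: "simple_graph V E" and no_isolated_vertex: "no_isolated V E"
begin

definition deg :: "'a \<Rightarrow> real" where
  "deg v = real (degree E v)"

definition deg_inner :: "('a \<Rightarrow> real) \<Rightarrow> ('a \<Rightarrow> real) \<Rightarrow> real" where
  "deg_inner f g = (\<Sum>v\<in>V. deg v * f v * g v)"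

definition adj_form :: "('a \<Rightarrow> real) \<Rightarrow> ('a \<Rightarrow> real) \<Rightarrow> real" where
  "adj_form f g = (\<Sum>v\<in>V. \<Sum>u\<in>V. of_bool ({u, v} \<in> E) * f u * g v)"

definition lap_form :: "('a \<Rightarrow> real) \<Rightarrow> ('a \<Rightarrow> real) \<Rightarrow> real" where
  "lap_form f g = deg_inner f g - adj_form f g"

lemma finite_vertices: "finite V"
  using simple_graph by (simp add: simple_graph_def)

lemma finite_edges: "finite E"
  using simple_graph by (rule simple_graph_finite_edges)

lemma deg_ge_1: "v \<in> V \<Longrightarrow> 1 \<le> deg v"
proof -
  assume "v \<in> V"
  then have "{e \<in> E. v \<in> e} \<noteq> {}"
    using no_isolated_vertex unfolding no_isolated_def by blast
  then show "1 \<le> deg v"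
    using finite_edges by (simp add: deg_def degree_def Suc_leI card_gt_0_iff)
qed

lemma deg_nonneg: "0 \<le> deg v"
  by (simp add: deg_def)

lemma deg_inner_commute: "deg_inner f g = deg_inner g f"
  unfolding deg_inner_def by (simp add: mult_ac)

lemma adj_form_commute: "adj_form f g = adj_form g f"
  unfolding adj_form_def
  by (subst sum.swap) (auto simp: insert_commute mult.commute intro!: sum.cong)

lemma lap_form_commute: "lap_form f g = lap_form g f"
  unfolding lap_form_def deg_inner_commute[of f] adj_form_commute[of f] ..

lemma deg_inner_self_nonneg: "0 \<le> deg_inner f f"
  unfolding deg_inner_def by (intro sum_nonneg) (simp add: deg_nonneg mult.assoc)

lemma deg_inner_self_pos:
  assumes "v \<in> V" and "f v \<noteq> 0"
  shows "0 < deg_inner f f"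
proof -
  have "0 < deg v * (f v * f v)"
    using deg_ge_1[OF assms(1)] assms(2) by (metis less_le_trans mult_pos_pos not_real_square_gt_zero zero_less_one)
  then show ?thesis
    unfolding deg_inner_def using assms(1)
    by (intro sum_pos2[OF finite_vertices]) (auto simp: mult.assoc deg_nonneg)
qed

lemma deg_inner_cong: "(\<And>v. v \<in> V \<Longrightarrow> f v = f' v) \<Longrightarrow> (\<And>v. v \<in> V \<Longrightarrow> g v = g' v) \<Longrightarrow>
    deg_inner f g = deg_inner f' g'"
  unfolding deg_inner_def by (intro sum.cong) auto

lemma lap_form_cong: "(\<And>v. v \<in> V \<Longrightarrow> f v = f' v) \<Longrightarrow> (\<And>v. v \<in> V \<Longrightarrow> g v = g' v) \<Longrightarrow>
    lap_form f g = lap_form f' g'"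
  unfolding lap_form_def adj_form_def
  by (intro arg_cong2[where f = minus] deg_inner_cong sum.cong) auto

lemma deg_laplacian:
  assumes "v \<in> V"
  shows "deg v * norm_laplacian V E f v = deg v * f v - (\<Sum>u\<in>V. of_bool ({u, v} \<in> E) * f u)"
proof -
  have "(\<Sum>u | u \<in> V \<and> {u, v} \<in> E. f u) = (\<Sum>u\<in>V. of_bool ({u, v} \<in> E) * f u)"
    using finite_vertices by (simp add: sum.inter_filter[symmetric] Int_def)
  then show ?thesis
    using deg_ge_1[OF assms]
    unfolding norm_laplacian_def deg_def by (simp add: right_diff_distrib)
qed

lemma sum_deg_laplacian: "(\<Sum>v\<in>V. deg v * g v * norm_laplacian V E f v) = lap_form f g"
proof -
  have "(\<Sum>v\<in>V. deg v * g v * norm_laplacian V E f v)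
      = (\<Sum>v\<in>V. g v * (deg v * f v - (\<Sum>u\<in>V. of_bool ({u, v} \<in> E) * f u)))"
  proof (intro sum.cong refl)
    fix v assume "v \<in> V"
    have "deg v * g v * norm_laplacian V E f v = g v * (deg v * norm_laplacian V E f v)"
      by simp
    also have "\<dots> = g v * (deg v * f v - (\<Sum>u\<in>V. of_bool ({u, v} \<in> E) * f u))"
      using \<open>v \<in> V\<close> by (simp only: deg_laplacian)
    finally show "deg v * g v * norm_laplacian V E f v = \<dots>" .
  qed
  also have "\<dots> = lap_form f g"
    unfolding lap_form_def deg_inner_def adj_form_def
    by (simp add: right_diff_distrib sum_subtractf sum_distrib_left mult_ac)
  finally show ?thesis .
qed

lemma lap_form_eigen:
  assumes "\<forall>v\<in>V. norm_laplacian V E f v = \<mu> * f v"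
  shows "lap_form f g = \<mu> * deg_inner f g"
proof -
  have "lap_form f g = (\<Sum>v\<in>V. deg v * g v * norm_laplacian V E f v)"
    by (simp add: sum_deg_laplacian)
  also have "\<dots> = \<mu> * deg_inner f g"
    using assms unfolding deg_inner_def by (simp add: sum_distrib_left mult_ac)
  finally show ?thesis .
qed

lemma deg_inner_eigen_orthogonal:
  assumes "\<forall>v\<in>V. norm_laplacian V E f v = \<mu> * f v" and "\<forall>v\<in>V. norm_laplacian V E g v = \<nu> * g v"
    and "\<mu> \<noteq> \<nu>"
  shows "deg_inner f g = 0"
  using lap_form_eigen[OF assms(1), of g] lap_form_eigen[OF assms(2), of f] assms(3)
  by (simp add: lap_form_commute deg_inner_commute)

lemma finite_deg_orthogonal:
  assumes pos: "\<And>w. w \<in> S \<Longrightarrow> 0 < deg_inner w w"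
    and orth: "\<And>w w'. w \<in> S \<Longrightarrow> w' \<in> S \<Longrightarrow> w \<noteq> w' \<Longrightarrow> deg_inner w w' = 0"
    and supp: "\<And>w x. w \<in> S \<Longrightarrow> x \<notin> V \<Longrightarrow> w x = 0"
  shows "finite S"
proof -
  define \<delta> where "\<delta> v = (\<lambda>x. if x = v then 1 else 0 :: real)" for v :: 'a
  have "S \<subseteq> real_fun.span (\<delta> ` V)"
  proof
    fix w assume "w \<in> S"
    then have "w = (\<Sum>v\<in>V. (\<lambda>x. w v * \<delta> v x))"
      using supp finite_vertices by (auto simp: fun_eq_iff sum_fun_apply \<delta>_def if_distrib cong: if_cong)
    also have "\<dots> \<in> real_fun.span (\<delta> ` V)"
      by (intro real_fun.span_sum real_fun.span_scale real_fun.span_base) auto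
    finally show "w \<in> real_fun.span (\<delta> ` V)" .
  qed
  moreover have "real_fun.independent S"
    unfolding real_fun.independent_explicit_finite_subsets
  proof (intro allI impI ballI)
    fix T u w
    assume T: "T \<subseteq> S" "finite T" and comb: "(\<Sum>w\<in>T. (\<lambda>x. u w * w x)) = 0" and "w \<in> T"
    have "0 = deg_inner (\<Sum>w'\<in>T. (\<lambda>x. u w' * w' x)) w"
      unfolding comb deg_inner_def by simp
    also have "\<dots> = (\<Sum>w'\<in>T. u w' * deg_inner w' w)"
      unfolding deg_inner_def sum_fun_apply
      by (simp add: sum_distrib_left sum_distrib_right mult_ac) (rule sum.swap)
    also have "\<dots> = u w * deg_inner w w"
      using T \<open>w \<in> T\<close> by (subst sum.remove[of T w]) (auto intro!: sum.neutral simp: orth subsetD)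
    finally show "u w = 0"
      using pos[of w] T \<open>w \<in> T\<close> by auto
  qed
  ultimately show ?thesis
    using real_fun.independent_span_bound finite_vertices by blast
qed

text \<open>Without this, the \<open>Max\<close> in \<^const>\<open>lambda_max\<close> would be unspecified.\<close>

lemma finite_eigenvalues: "finite {\<mu>. laplacian_eigenvalue V E \<mu>}" (is "finite ?\<Lambda>")
proof -
  have "\<forall>\<mu>\<in>?\<Lambda>. \<exists>f. (\<exists>v\<in>V. f v \<noteq> 0) \<and> (\<forall>v\<in>V. norm_laplacian V E f v = \<mu> * f v)"
    by (simp add: laplacian_eigenvalue_def)
  then obtain \<phi> where \<phi>: "\<And>\<mu>. \<mu> \<in> ?\<Lambda> \<Longrightarrow>
      (\<exists>v\<in>V. \<phi> \<mu> v \<noteq> 0) \<and> (\<forall>v\<in>V. norm_laplacian V E (\<phi> \<mu>) v = \<mu> * \<phi> \<mu> v)"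
    by (metis bchoice)
  define \<psi> where "\<psi> \<mu> x = (if x \<in> V then \<phi> \<mu> x else 0)" for \<mu> x
  have pos: "0 < deg_inner (\<psi> \<mu>) (\<psi> \<mu>)" if "\<mu> \<in> ?\<Lambda>" for \<mu>
    using \<phi>[OF that] deg_inner_self_pos unfolding \<psi>_def by auto
  have orth: "deg_inner (\<psi> \<mu>) (\<psi> \<nu>) = 0" if "\<mu> \<in> ?\<Lambda>" "\<nu> \<in> ?\<Lambda>" "\<mu> \<noteq> \<nu>" for \<mu> \<nu>
  proof -
    have "deg_inner (\<psi> \<mu>) (\<psi> \<nu>) = deg_inner (\<phi> \<mu>) (\<phi> \<nu>)"
      unfolding \<psi>_def by (rule deg_inner_cong) auto
    also have "\<dots> = 0"
      using \<phi>[OF that(1)] \<phi>[OF that(2)] that(3) by (blast intro: deg_inner_eigen_orthogonal)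
    finally show ?thesis .
  qed
  have "inj_on \<psi> ?\<Lambda>"
    using pos orth by (fastforce intro: inj_onI)
  moreover have "finite (\<psi> ` ?\<Lambda>)"
    by (rule finite_deg_orthogonal) (auto simp: pos \<psi>_def intro!: orth)
  ultimately show ?thesis
    using finite_image_iff by blast
qed

lemma deg_inner_add_scaled:
  "deg_inner (\<lambda>x. f x + t * g x) (\<lambda>x. f x + t * g x)
    = deg_inner f f + 2 * t * deg_inner f g + t\<^sup>2 * deg_inner g g"
  unfolding deg_inner_def
  by (simp add: sum.distrib sum_distrib_left power2_eq_square algebra_simps)

lemma lap_form_add_scaled:
  "lap_form (\<lambda>x. f x + t * g x) (\<lambda>x. f x + t * g x)
    = lap_form f f + 2 * t * lap_form f g + t\<^sup>2 * lap_form g g"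
proof -
  have "adj_form (\<lambda>x. f x + t * g x) (\<lambda>x. f x + t * g x)
      = adj_form f f + t * adj_form f g + t * adj_form g f + t\<^sup>2 * adj_form g g"
    unfolding adj_form_def
    by (simp add: sum.distrib sum_distrib_left power2_eq_square algebra_simps)
  then show ?thesis
    unfolding lap_form_def deg_inner_add_scaled adj_form_commute[of g f]
    by (simp add: algebra_simps)
qed

lemma deg_inner_scale: "deg_inner (\<lambda>x. c * f x) (\<lambda>x. c * f x) = c\<^sup>2 * deg_inner f f"
  using deg_inner_add_scaled[of "\<lambda>_. 0" c f] by (simp add: deg_inner_def)

lemma lap_form_scale: "lap_form (\<lambda>x. c * f x) (\<lambda>x. c * f x) = c\<^sup>2 * lap_form f f"
  using lap_form_add_scaled[of "\<lambda>_. 0" c f] by (simp add: lap_form_def deg_inner_def adj_form_def)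

lemma continuous_map_deg_inner_self:
  "continuous_map (powertop_real V) euclideanreal (\<lambda>f. deg_inner f f)"
  unfolding deg_inner_def
  by (intro continuous_map_sum finite_vertices continuous_map_real_mult continuous_map_canonical_const
      continuous_map_product_projection[where X = "\<lambda>_. euclideanreal", simplified])

lemma continuous_map_lap_form_self:
  "continuous_map (powertop_real V) euclideanreal (\<lambda>f. lap_form f f)"
  unfolding lap_form_def adj_form_def
  by (intro continuous_map_diff continuous_map_deg_inner_self continuous_map_sum finite_vertices
      continuous_map_real_mult continuous_map_canonical_const
      continuous_map_product_projection[where X = "\<lambda>_. euclideanreal", simplified])

lemma compactin_deg_unit_sphere:
  "compactin (powertop_real V)
     {f \<in> topspace (powertop_real V). deg_inner f f = 1}"
    (is "compactin ?T ?K")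
proof (rule closed_compactin)
  show "compactin ?T (PiE V (\<lambda>_. {-1..1}))"
    by (simp add: compactin_PiE)
  show "closedin ?T ?K"
    using closedin_continuous_map_preimage[OF continuous_map_deg_inner_self, of "{1}"] by simp
  show "?K \<subseteq> PiE V (\<lambda>_. {-1..1})"
  proof
    fix f assume "f \<in> ?K"
    then have f: "f \<in> PiE V (\<lambda>_. UNIV)" "deg_inner f f = 1"
      by auto
    have "\<bar>f v\<bar> \<le> 1" if "v \<in> V" for v
    proof -
      have "deg v * (f v)\<^sup>2 \<le> deg_inner f f"
        unfolding deg_inner_def power2_eq_square mult.assoc
        using that finite_vertices by (intro member_le_sum) (auto simp: deg_nonneg)
      moreover have "(f v)\<^sup>2 \<le> deg v * (f v)\<^sup>2"
        using deg_ge_1[OF that] by (simp add: mult_le_cancel_right1)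
      ultimately have "(f v)\<^sup>2 \<le> 1"
        using f(2) by linarith
      then show ?thesis
        by (simp add: abs_square_le_1)
    qed
    then show "f \<in> PiE V (\<lambda>_. {-1..1})"
      using f(1) by (auto simp: PiE_iff abs_le_iff)
  qed
qed

lemma deg_unit_sphere_normalize:
  assumes "0 < deg_inner h h"
  defines "h' \<equiv> restrict (\<lambda>v. (1 / sqrt (deg_inner h h)) * h v) V"
  shows "h' \<in> {f \<in> topspace (powertop_real V). deg_inner f f = 1}"
    and "lap_form h' h' = lap_form h h / deg_inner h h"
proof -
  have "deg_inner h' h' = (1 / sqrt (deg_inner h h))\<^sup>2 * deg_inner h h"
    unfolding h'_def deg_inner_scale[symmetric] by (rule deg_inner_cong) auto
  then show "h' \<in> {f \<in> topspace (powertop_real V). deg_inner f f = 1}"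
    using assms(1) by (simp add: h'_def power_divide)
  have "lap_form h' h' = (1 / sqrt (deg_inner h h))\<^sup>2 * lap_form h h"
    unfolding h'_def lap_form_scale[symmetric] by (rule lap_form_cong) auto
  then show "lap_form h' h' = lap_form h h / deg_inner h h"
    using assms(1) by (simp add: power_divide)
qed

lemma ex_rayleigh_maximizer:
  assumes "V \<noteq> {}"
  obtains f\<^sub>0 where "deg_inner f\<^sub>0 f\<^sub>0 = 1" and "\<And>h. lap_form h h \<le> lap_form f\<^sub>0 f\<^sub>0 * deg_inner h h"
proof -
  let ?K = "{f \<in> topspace (powertop_real V). deg_inner f f = 1}"
  obtain v\<^sub>0 where "v\<^sub>0 \<in> V"
    using assms by blast
  then have "0 < deg_inner (\<lambda>v. of_bool (v = v\<^sub>0)) (\<lambda>v. of_bool (v = v\<^sub>0))"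
    by (intro deg_inner_self_pos) auto
  then have "(\<lambda>f. lap_form f f) ` ?K \<noteq> {}"
    using deg_unit_sphere_normalize(1) by blast
  moreover have "compact ((\<lambda>f. lap_form f f) ` ?K)"
    using image_compactin[OF compactin_deg_unit_sphere continuous_map_lap_form_self] by simp
  ultimately obtain m where "m \<in> (\<lambda>f. lap_form f f) ` ?K" "\<forall>t \<in> (\<lambda>f. lap_form f f) ` ?K. t \<le> m"
    using compact_attains_sup by blast
  then obtain f\<^sub>0 where f\<^sub>0: "f\<^sub>0 \<in> ?K" and max: "\<And>f. f \<in> ?K \<Longrightarrow> lap_form f f \<le> lap_form f\<^sub>0 f\<^sub>0"
    by auto
  have "lap_form h h \<le> lap_form f\<^sub>0 f\<^sub>0 * deg_inner h h" for h
  proof (cases "deg_inner h h = 0")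
    case True
    then have "h v = 0" if "v \<in> V" for v
      using deg_inner_self_pos[OF that] by fastforce
    then have "lap_form h h = lap_form (\<lambda>_. 0) (\<lambda>_. 0)"
      by (intro lap_form_cong) auto
    then show ?thesis
      using True by (simp add: lap_form_def deg_inner_def adj_form_def)
  next
    case False
    then have "0 < deg_inner h h"
      using deg_inner_self_nonneg[of h] by linarith
    then show ?thesis
      using max[OF deg_unit_sphere_normalize(1)] deg_unit_sphere_normalize(2) by (simp add: divide_le_eq)
  qed
  with f\<^sub>0 that show ?thesis by blast
qed

lemma deg_inner_indicator: "w \<in> V \<Longrightarrow> deg_inner f (\<lambda>v. of_bool (v = w)) = deg w * f w"
  unfolding deg_inner_def using finite_vertices by simp

lemma lap_form_indicator:
  assumes "w \<in> V"
  shows "lap_form f (\<lambda>v. of_bool (v = w)) = deg w * norm_laplacian V E f w"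
proof -
  have "lap_form f (\<lambda>v. of_bool (v = w)) = (\<Sum>v\<in>V. deg v * norm_laplacian V E f v * of_bool (v = w))"
    unfolding sum_deg_laplacian[symmetric] by (simp add: mult_ac)
  also have "\<dots> = deg w * norm_laplacian V E f w"
    using assms finite_vertices by simp
  finally show ?thesis .
qed

lemma rayleigh_maximizer_eigenfunction:
  assumes "deg_inner f\<^sub>0 f\<^sub>0 = 1" and max: "\<And>h. lap_form h h \<le> lap_form f\<^sub>0 f\<^sub>0 * deg_inner h h"
  shows "\<forall>v\<in>V. norm_laplacian V E f\<^sub>0 v = lap_form f\<^sub>0 f\<^sub>0 * f\<^sub>0 v"
proof
  fix v\<^sub>0 assume "v\<^sub>0 \<in> V"
  let ?\<mu> = "lap_form f\<^sub>0 f\<^sub>0" and ?g = "\<lambda>v. of_bool (v = v\<^sub>0) :: real"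
  have "2 * t * (lap_form f\<^sub>0 ?g - ?\<mu> * deg_inner f\<^sub>0 ?g) + t\<^sup>2 * (lap_form ?g ?g - ?\<mu> * deg_inner ?g ?g) \<le> 0"
    for t
    using max[of "\<lambda>v. f\<^sub>0 v + t * ?g v"] assms(1)
    unfolding lap_form_add_scaled deg_inner_add_scaled by (simp add: algebra_simps)
  then have "lap_form f\<^sub>0 ?g = ?\<mu> * deg_inner f\<^sub>0 ?g"
    using linear_coeff_eq_0_if_quadratic_nonpos by fastforce
  moreover have "lap_form f\<^sub>0 ?g = deg v\<^sub>0 * norm_laplacian V E f\<^sub>0 v\<^sub>0"
    using \<open>v\<^sub>0 \<in> V\<close> by (rule lap_form_indicator)
  moreover have "deg_inner f\<^sub>0 ?g = deg v\<^sub>0 * f\<^sub>0 v\<^sub>0"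
    using \<open>v\<^sub>0 \<in> V\<close> by (rule deg_inner_indicator)
  ultimately show "norm_laplacian V E f\<^sub>0 v\<^sub>0 = ?\<mu> * f\<^sub>0 v\<^sub>0"
    using deg_ge_1[OF \<open>v\<^sub>0 \<in> V\<close>] by simp
qed

lemma lambda_max_eq_rayleigh_max:
  assumes f\<^sub>0: "deg_inner f\<^sub>0 f\<^sub>0 = 1" and max: "\<And>h. lap_form h h \<le> lap_form f\<^sub>0 f\<^sub>0 * deg_inner h h"
  shows "lambda_max V E = lap_form f\<^sub>0 f\<^sub>0"
proof -
  let ?\<mu> = "lap_form f\<^sub>0 f\<^sub>0"
  have "\<exists>v\<in>V. f\<^sub>0 v \<noteq> 0"
  proof (rule ccontr)
    assume "\<not> (\<exists>v\<in>V. f\<^sub>0 v \<noteq> 0)"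
    then have "deg_inner f\<^sub>0 f\<^sub>0 = 0"
      by (simp add: deg_inner_def)
    with f\<^sub>0 show False by simp
  qed
  then have "laplacian_eigenvalue V E ?\<mu>"
    using rayleigh_maximizer_eigenfunction[OF f\<^sub>0 max] unfolding laplacian_eigenvalue_def by blast
  moreover have "\<nu> \<le> ?\<mu>" if \<nu>: "laplacian_eigenvalue V E \<nu>" for \<nu>
  proof -
    obtain \<phi> where "\<exists>v\<in>V. \<phi> v \<noteq> 0" and eigen: "\<forall>v\<in>V. norm_laplacian V E \<phi> v = \<nu> * \<phi> v"
      using \<nu> unfolding laplacian_eigenvalue_def by blast
    then have "0 < deg_inner \<phi> \<phi>"
      using deg_inner_self_pos by blast
    moreover have "\<nu> * deg_inner \<phi> \<phi> \<le> ?\<mu> * deg_inner \<phi> \<phi>"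
      using lap_form_eigen[OF eigen, of \<phi>] max[of \<phi>] by simp
    ultimately show ?thesis
      by simp
  qed
  ultimately show ?thesis
    unfolding lambda_max_def using finite_eigenvalues by (intro Max_eqI) auto
qed

lemma lambda_max_ge_rayleigh:
  assumes "0 < deg_inner f f"
  shows "lap_form f f / deg_inner f f \<le> lambda_max V E"
proof -
  have "V \<noteq> {}"
    using assms by (auto simp: deg_inner_def)
  then obtain f\<^sub>0 where f\<^sub>0: "deg_inner f\<^sub>0 f\<^sub>0 = 1" and max: "\<And>h. lap_form h h \<le> lap_form f\<^sub>0 f\<^sub>0 * deg_inner h h"
    using ex_rayleigh_maximizer by blast
  then show ?thesis
    using max[of f] assms lambda_max_eq_rayleigh_max[OF f\<^sub>0 max] by (simp add: divide_le_eq)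
qed

end

section \<open>Test functions from cuts\<close>


definition signed_indicator :: "'a set set \<Rightarrow> ('a \<Rightarrow> bool) \<Rightarrow> 'a \<Rightarrow> real" where
  "signed_indicator A \<sigma> v = (if v \<in> \<Union>A then if \<sigma> v then 1 else -1 else 0)"

context graph_without_isolated
begin

lemma card_neighbours: "card {u \<in> V. {u, v} \<in> E} = degree E v"
proof -
  have "{e \<in> E. v \<in> e} = (\<lambda>u. {u, v}) ` {u \<in> V. {u, v} \<in> E}"
  proof (intro equalityI subsetI)
    fix e assume "e \<in> {e \<in> E. v \<in> e}"
    then obtain a b where "a \<in> V" "b \<in> V" "e = {a, b}" "e \<in> E" "v \<in> e"
      using simple_graph_edgeE[OF simple_graph] by blast
    then show "e \<in> (\<lambda>u. {u, v}) ` {u \<in> V. {u, v} \<in> E}"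
      by (auto simp: insert_commute)
  qed auto
  moreover have "inj_on (\<lambda>u. {u, v}) {u \<in> V. {u, v} \<in> E}"
    using simple_graph_edgeE[OF simple_graph] by (fastforce simp: inj_on_def doubleton_eq_iff)
  ultimately show ?thesis
    unfolding degree_def by (simp add: card_image)
qed

lemma sum_adjacent: "(\<Sum>u\<in>V. of_bool ({u, v} \<in> E)) = deg v"
  using finite_vertices card_neighbours by (simp add: deg_def Int_def)

lemma lap_form_self_eq_sum_sq_diff:
  "2 * lap_form f f = (\<Sum>v\<in>V. \<Sum>u\<in>V. of_bool ({u, v} \<in> E) * (f u - f v)\<^sup>2)"
proof -
  have sq_right: "(\<Sum>v\<in>V. \<Sum>u\<in>V. of_bool ({u, v} \<in> E) * (f v)\<^sup>2) = deg_inner f f"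
    unfolding deg_inner_def sum_distrib_right[symmetric] sum_adjacent
    by (simp add: power2_eq_square mult.assoc)
  moreover have "(\<Sum>v\<in>V. \<Sum>u\<in>V. of_bool ({u, v} \<in> E) * (f u)\<^sup>2)
      = (\<Sum>v\<in>V. \<Sum>u\<in>V. of_bool ({u, v} \<in> E) * (f v)\<^sup>2)"
    by (subst sum.swap) (simp add: insert_commute)
  ultimately show ?thesis
    unfolding lap_form_def adj_form_def
    by (simp add: power2_diff sum.distrib sum_subtractf sum_distrib_left algebra_simps)
qed

lemma lap_form_signed_indicator_ge:
  assumes "A \<subseteq> E"
  shows "4 * real (card (cut_arcs A \<sigma>)) \<le> lap_form (signed_indicator A \<sigma>) (signed_indicator A \<sigma>)"
proof -
  let ?f = "signed_indicator A \<sigma>" and ?P = "cut_arcs A \<sigma>"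
  let ?term = "\<lambda>(u, v). of_bool ({u, v} \<in> E) * (?f u - ?f v)\<^sup>2"
  have arc: "u \<in> \<Union>A" "v \<in> \<Union>A" "{u, v} \<in> E" "{v, u} \<in> E" "\<sigma> u" "\<not> \<sigma> v" if "(u, v) \<in> ?P" for u v
    using that assms unfolding cut_arcs_def by (auto intro: UnionI[of "{u, v}"] simp: insert_commute)
  have "\<Union>A \<subseteq> V"
    using Union_mono[OF assms] simple_graph_Union_subset[OF simple_graph] by (rule order_trans)
  then have P_sub: "?P \<subseteq> V \<times> V" "prod.swap ` ?P \<subseteq> V \<times> V"
    using arc by auto
  then have fin: "finite ?P"
    using finite_vertices by (meson finite_SigmaI finite_subset)
  have disj: "?P \<inter> prod.swap ` ?P = {}"
    by (auto simp: cut_arcs_def)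
  have "?term p = 4" if p: "p \<in> ?P \<union> prod.swap ` ?P" for p
  proof -
    obtain u v where "(u, v) \<in> ?P" and "p = (u, v) \<or> p = (v, u)"
      using p by (cases p) auto
    then show ?thesis
      using arc[of u v] by (auto simp: signed_indicator_def)
  qed
  then have "8 * real (card ?P) = (\<Sum>p \<in> ?P \<union> prod.swap ` ?P. ?term p)"
    using fin disj by (simp add: card_Un_disjoint card_image)
  also have "\<dots> \<le> (\<Sum>p \<in> V \<times> V. ?term p)"
    using P_sub finite_vertices by (intro sum_mono2) auto
  also have "\<dots> = 2 * lap_form ?f ?f"
    unfolding lap_form_self_eq_sum_sq_diff sum.cartesian_product[symmetric]
    by (subst sum.swap) simp
  finally show ?thesis by simp
qed

lemma deg_inner_signed_indicator:
  assumes "A \<subseteq> E"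
  shows "deg_inner (signed_indicator A \<sigma>) (signed_indicator A \<sigma>) = (\<Sum>v\<in>\<Union>A. deg v)"
proof -
  have "\<Union>A \<subseteq> V"
    using Union_mono[OF assms] simple_graph_Union_subset[OF simple_graph] by (rule order_trans)
  have "deg_inner (signed_indicator A \<sigma>) (signed_indicator A \<sigma>) = (\<Sum>v\<in>V. deg v * of_bool (v \<in> \<Union>A))"
    unfolding deg_inner_def signed_indicator_def by (intro sum.cong) auto
  also have "\<dots> = (\<Sum>v\<in>\<Union>A. deg v)"
    using finite_vertices \<open>\<Union>A \<subseteq> V\<close> by (simp add: Int_absorb1 del: Union_iff)
  finally show ?thesis .
qed

lemma card_Union_Int_edge_le:
  assumes "e \<in> E"
  shows "real (card (\<Union>A \<inter> e)) \<le> 2 * of_bool (e \<in> A \<union> boundary E A)"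
proof (cases "e \<in> A \<union> boundary E A")
  case True
  obtain a b where "e = {a, b}"
    using simple_graph_edgeE[OF simple_graph assms] by blast
  then have "card e \<le> 2"
    by (simp add: card_insert_if)
  moreover have "card (\<Union>A \<inter> e) \<le> card e"
    using \<open>e = {a, b}\<close> by (intro card_mono) auto
  ultimately show ?thesis
    using True by simp
next
  case False
  then have "\<Union>A \<inter> e = {}"
    using assms unfolding boundary_def restr_vertices_def by auto
  then show ?thesis
    using False by simp
qed

lemma sum_deg_Union_le:
  assumes "A \<subseteq> E"
  shows "(\<Sum>v\<in>\<Union>A. deg v) \<le> 2 * real (card A + card (boundary E A))"
proof -
  let ?U = "\<Union>A" and ?B = "boundary E A"
  have "finite ?U"
    using Union_mono[OF assms] simple_graph_Union_subset[OF simple_graph] finite_vertices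
    by (meson finite_subset order_trans)
  have "A \<union> ?B \<subseteq> E"
    using assms by (auto simp: boundary_def)
  have "(\<Sum>v\<in>?U. deg v) = (\<Sum>v\<in>?U. \<Sum>e\<in>E. of_bool (v \<in> e))"
    using finite_edges by (simp add: deg_def degree_def Int_def)
  also have "\<dots> = (\<Sum>e\<in>E. real (card (?U \<inter> e)))"
    using \<open>finite ?U\<close> by (subst sum.swap) (simp add: Int_def)
  also have "\<dots> \<le> (\<Sum>e\<in>E. 2 * of_bool (e \<in> A \<union> ?B))"
    using card_Union_Int_edge_le by (rule sum_mono)
  also have "\<dots> = 2 * real (card (A \<union> ?B))"
    using finite_edges \<open>A \<union> ?B \<subseteq> E\<close> by (simp add: sum_distrib_left[symmetric] Int_absorb1 del: Un_iff)
  also have "\<dots> = 2 * real (card A + card ?B)"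
    using finite_edges assms
    by (subst card_Un_disjoint) (auto simp: boundary_def intro: finite_subset)
  finally show ?thesis .
qed

lemma lambda_max_ge_cut_arcs:
  assumes "A \<subseteq> E" and "A \<noteq> {}"
  shows "2 * real (card (cut_arcs A \<sigma>)) / real (card A + card (boundary E A)) \<le> lambda_max V E"
proof -
  let ?f = "signed_indicator A \<sigma>" and ?m = "real (card A + card (boundary E A))"
  obtain e where "e \<in> A"
    using assms(2) by blast
  then obtain a b where "a \<in> V" "e = {a, b}"
    using assms(1) simple_graph_edgeE[OF simple_graph] by blast
  then have N_pos: "0 < deg_inner ?f ?f"
    using \<open>e \<in> A\<close> by (intro deg_inner_self_pos[of a]) (auto simp: signed_indicator_def)
  have N_le: "deg_inner ?f ?f \<le> 2 * ?m"
    using assms(1) by (simp only: deg_inner_signed_indicator sum_deg_Union_le)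
  have q: "4 * real (card (cut_arcs A \<sigma>)) \<le> lap_form ?f ?f"
    using assms(1) by (rule lap_form_signed_indicator_ge)
  have "0 < ?m"
    using less_le_trans[OF N_pos N_le] by simp
  then have "2 * real (card (cut_arcs A \<sigma>)) / ?m = 4 * real (card (cut_arcs A \<sigma>)) / (2 * ?m)"
    by (simp add: divide_simps)
  also have "\<dots> \<le> lap_form ?f ?f / (2 * ?m)"
    using q by (simp add: divide_right_mono)
  also have "\<dots> \<le> lap_form ?f ?f / deg_inner ?f ?f"
    using N_pos N_le q by (intro divide_left_mono) auto
  also have "\<dots> \<le> lambda_max V E"
    using N_pos by (rule lambda_max_ge_rayleigh)
  finally show ?thesis .
qed

lemma lambda_max_ge_graph_rank:
  assumes "A \<subseteq> E" and "A \<noteq> {}" and "simple_graph W A"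
  shows "2 * real (graph_rank W A) / real (card A + card (boundary E A)) \<le> lambda_max V E"
proof -
  obtain \<sigma> where "graph_rank W A \<le> card (cut_arcs A \<sigma>)"
    using ex_cut_arcs_ge_graph_rank[OF assms(3)] by blast
  then have "2 * real (graph_rank W A) / real (card A + card (boundary E A))
      \<le> 2 * real (card (cut_arcs A \<sigma>)) / real (card A + card (boundary E A))"
    by (intro divide_right_mono) auto
  also have "\<dots> \<le> lambda_max V E"
    using assms(1,2) by (rule lambda_max_ge_cut_arcs)
  finally show ?thesis .
qed


lemma lambda_max_ge_density_boundary:
  assumes "A \<subseteq> E" and "A \<noteq> {}"
  shows "2 / density V A * (real (card A) / real (card A + card (boundary E A))) \<le> lambda_max V E"
proof -
  have "0 < card A"
    using assms finite_edges by (simp add: card_gt_0_iff finite_subset)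
  then show ?thesis
    using lambda_max_ge_graph_rank[OF assms simple_graph_mono[OF simple_graph assms(1)]]
    by (simp add: divide_density)
qed

lemma lambda_max_restr_vertices_ge_density:
  assumes "uniformly_dense V E" and "A \<subseteq> E" and "A \<noteq> {}"
  shows "2 / density V E \<le> lambda_max (restr_vertices A) A"
proof -
  have A: "simple_graph V A"
    using simple_graph assms(2) by (rule simple_graph_mono)
  interpret restricted: graph_without_isolated "restr_vertices A" A
    using simple_graph_restr_vertices[OF A] no_isolated_restr_vertices by unfold_locales
  have "0 < card A"
    using assms(2,3) finite_edges by (simp add: card_gt_0_iff finite_subset)
  then have "0 < density V A"
    using graph_rank_pos[OF A assms(3)] by (simp add: density_def)
  moreover have "density V A \<le> density V E"
    using assms unfolding uniformly_dense_def by blast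
  ultimately have "2 / density V E \<le> 2 / density V A"
    by (simp add: frac_le)
  also have "\<dots> = 2 * real (graph_rank V A) / real (card A + card (boundary A A))"
    by (simp add: divide_density boundary_def)
  also have "\<dots> \<le> lambda_max (restr_vertices A) A"
    using order_refl assms(3) A by (rule restricted.lambda_max_ge_graph_rank)
  finally show ?thesis .
qed

end

theorem theorem3p16:
  fixes V :: "'a set" and E :: "'a set set"
  assumes "simple_graph V E" and "E \<noteq> {}" and "no_isolated V E"
  shows "lambda_max V E \<ge> 2 / density V E
    \<and> (\<forall>A. A \<subseteq> E \<and> A \<noteq> {} \<longrightarrow>
           lambda_max V E \<ge> 2 / density V A * (real (card A) / real (card A + card (boundary E A))))
    \<and> (uniformly_dense V E \<longrightarrow>
           (\<forall>A. A \<subseteq> E \<and> A \<noteq> {} \<longrightarrow> lambda_max (restr_vertices A) A \<ge> 2 / density V E))"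
proof -
  interpret graph_without_isolated V E
    using assms(1,3) by unfold_locales
  have "0 < card E"
    using finite_edges assms(2) by (simp add: card_gt_0_iff)
  moreover have "boundary E E = {}"
    by (simp add: boundary_def)
  ultimately have "2 / density V E \<le> lambda_max V E"
    using lambda_max_ge_density_boundary[OF order_refl assms(2)] by simp
  then show ?thesis
    using lambda_max_ge_density_boundary lambda_max_restr_vertices_ge_density by blast
qed

end
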